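(* Assume $f_0,f_1\in \mathrm{PL}_0(\mathbf{I})$ generate a standard isomorphic copy of $F$. (Up) Suppose $(a,c)$ is an up-bump of $f_0$, $(b_n,c)$ is an orbital of $f_1$, and $p$ is the minimal number such that $f_0|_{[p,c]}=f_1|_{[p,c]}$. If $q\in(a,p)$ satisfies $qf_0=qf_1$, then $q\in(b_n,p)$. (Down) Suppose $(a,c)$ is a down-bump of $f_0$, $(a,d_1)$ is an orbital of $f_1$, and $\rho$ is the maximal number such that $f_0|_{[a,\rho]}=f_1|_{[a,\rho]}$. If $q\in(\rho,c)$ satisfies $qf_0=qf_1$, then $q\in(\rho,d_1)$.
   Context: $\mathrm{PL}_0(\mathbf{I})$ is the group of orientation-preserving piecewise-linear homeomorphisms of $[0,1]$ with finitely many points of non-differentiability; functions act on the right ($tf=f(t)$). The orbitals of $f$ are the connected components (open intervals) of $\operatorname{Supp}(f)=\{x: xf\ne x\}$; an orbital $A$ is an up-bump (resp. down-bump) if $xf>x$ (resp. $xf<x$) for all $x\in A$. Thompson's group $F=\langle x_0,x_1\mid [x_0x_1^{-1},x_1^{x_0}]=[x_0x_1^{-1},x_1^{x_0^2}]=1\rangle$, with $a^b=b^{-1}ab$, $[a,b]=aba^{-1}b^{-1}$; $f_0,f_1$ generate a standard isomorphic copy of $F$ if $\langle f_0,f_1\rangle\cong F$ via an isomorphism with $x_0\mapsto f_0$, $x_1\mapsto f_1$. *)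

theory Defs
  imports "HOL-Analysis.Analysis"
begin

text \<open>Elements of PL_0(I): orientation-preserving homeomorphisms of [0,1]
  (continuous, strictly increasing, fixing 0 and 1) that are piecewise linear
  with finitely many breakpoints 0 = t_0 < ... < t_n = 1.
  Functions are total on real; only their values on [0,1] matter.\<close>
definition PL0 :: "(real \<Rightarrow> real) \<Rightarrow> bool" where
  "PL0 f \<longleftrightarrow> continuous_on {0..1} f \<and> strict_mono_on {0..1} f \<and> f 0 = 0 \<and> f 1 = 1 \<and>
     (\<exists>ts::real list. sorted_wrt (<) ts \<and> length ts \<ge> 2 \<and> hd ts = 0 \<and> last ts = 1 \<and>
        (\<forall>i < length ts - 1. \<exists>m k. \<forall>x \<in> {ts!i..ts!(i+1)}. f x = m * x + k))"

definition Supp :: "(real \<Rightarrow> real) \<Rightarrow> real set" where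
  "Supp f = {x \<in> {0..1}. f x \<noteq> x}"

definition orbital :: "(real \<Rightarrow> real) \<Rightarrow> real set \<Rightarrow> bool" where
  "orbital f A \<longleftrightarrow> A \<in> components (Supp f)"

definition up_bump :: "(real \<Rightarrow> real) \<Rightarrow> real set \<Rightarrow> bool" where
  "up_bump f A \<longleftrightarrow> orbital f A \<and> (\<forall>x\<in>A. f x > x)"

definition down_bump :: "(real \<Rightarrow> real) \<Rightarrow> real set \<Rightarrow> bool" where
  "down_bump f A \<longleftrightarrow> orbital f A \<and> (\<forall>x\<in>A. f x < x)"

text \<open>Words in the generators x_0 (False), x_1 (True); the second component
  marks an inverse letter.\<close>
type_synonym word = "(bool \<times> bool) list"

definition winv :: "word \<Rightarrow> word" where
  "winv w = rev (map (\<lambda>(g, i). (g, \<not> i)) w)"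

definition wconj :: "word \<Rightarrow> word \<Rightarrow> word" where
  "wconj a b = winv b @ a @ b"

definition wcomm :: "word \<Rightarrow> word \<Rightarrow> word" where
  "wcomm a b = a @ b @ winv a @ winv b"

definition X0 :: word where "X0 = [(False, False)]"
definition X1 :: word where "X1 = [(True, False)]"

definition F_relators :: "word set" where
  "F_relators = {wcomm (X0 @ winv X1) (wconj X1 X0),
                 wcomm (X0 @ winv X1) (wconj X1 (X0 @ X0))}"

inductive Feq :: "word \<Rightarrow> word \<Rightarrow> bool" where
  Feq_refl: "Feq w w"
| Feq_sym: "Feq u v \<Longrightarrow> Feq v u"
| Feq_trans: "Feq u v \<Longrightarrow> Feq v w \<Longrightarrow> Feq u w"
| Feq_cancel: "Feq (u @ [(g, i), (g, \<not> i)] @ v) (u @ v)"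
| Feq_rel: "r \<in> F_relators \<Longrightarrow> Feq (u @ r @ v) (u @ v)"

text \<open>Right action: t (l w) = (t l) w; inverse letters act by the inverse on [0,1].\<close>
definition letter_act :: "(real \<Rightarrow> real) \<Rightarrow> (real \<Rightarrow> real) \<Rightarrow> bool \<times> bool \<Rightarrow> real \<Rightarrow> real" where
  "letter_act f0 f1 l = (let h = (if fst l then f1 else f0) in
                          if snd l then inv_into {0..1} h else h)"

fun word_act :: "(real \<Rightarrow> real) \<Rightarrow> (real \<Rightarrow> real) \<Rightarrow> word \<Rightarrow> real \<Rightarrow> real" where
  "word_act f0 f1 [] = id"
| "word_act f0 f1 (l # w) = word_act f0 f1 w \<circ> letter_act f0 f1 l"

text \<open>f0, f1 generate a standard isomorphic copy of F: the assignment
  x0 \<mapsto> f0, x1 \<mapsto> f1 gives a well-defined injective homomorphism, i.e. a word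
  acts trivially on [0,1] iff it is trivial in F.\<close>
definition standard_F :: "(real \<Rightarrow> real) \<Rightarrow> (real \<Rightarrow> real) \<Rightarrow> bool" where
  "standard_F f0 f1 \<longleftrightarrow> (\<forall>w. (\<forall>t\<in>{0..1}. word_act f0 f1 w t = t) \<longleftrightarrow> Feq w [])"

end

theory Submission
  imports Defs
begin

text \<open>Each relator of \<open>F\<close> says that \<open>x\<^sub>1\<close> commutes with a certain word, namely
  \<open>x\<^sub>0\<^sup>2 x\<^sub>1\<^sup>-\<^sup>1 x\<^sub>0\<^sup>-\<^sup>1\<close> resp. \<open>x\<^sub>0\<^sup>3 x\<^sub>1\<^sup>-\<^sup>1 x\<^sub>0\<^sup>-\<^sup>2\<close>. An increasing homeomorphism
  commuting with \<open>k\<close> permutes the endpoints of the orbitals of \<open>k\<close>; when \<open>k\<close> is piecewise linear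
  these form a finite set, so each of them is fixed. Hence \<open>f\<^sub>0\<close> maps the orbital endpoints of
  \<open>f\<^sub>1\<close> into the agreement set \<open>{f\<^sub>0 = f\<^sub>1}\<close>, and the endpoints of the orbitals of
  \<open>x\<^sub>0\<^sup>3 x\<^sub>1\<^sup>-\<^sup>1 x\<^sub>0\<^sup>-\<^sup>2\<close> are fixed by \<open>f\<^sub>1\<close>; so inside one orbital of \<open>f\<^sub>1\<close> the condition
  \<open>f\<^sub>0\<^sup>3 x = f\<^sub>1 f\<^sub>0\<^sup>2 x\<close> holds everywhere or nowhere.

  In the up case suppose \<open>q \<le> b\<^sub>n\<close>. Let \<open>m\<close> be the last agreement point in \<open>[q, b\<^sub>n]\<close> and
  \<open>(u, v)\<close> the orbital of \<open>f\<^sub>1\<close> containing \<open>m\<close>. Then \<open>f\<^sub>0\<^sup>-\<^sup>1 v\<close> and \<open>f\<^sub>0\<^sup>-\<^sup>2 b\<^sub>n\<close> both lie in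
  \<open>(u, v)\<close>, the first satisfies the condition and the second does not. The down case is the mirror
  image. Only \<open>q \<in> (a, c)\<close> is used, not the extremal choice of \<open>p\<close> resp. \<open>\<rho>\<close>.\<close>

definition agree :: "(real \<Rightarrow> real) \<Rightarrow> (real \<Rightarrow> real) \<Rightarrow> real set" where
  "agree f g = {x \<in> {0..1}. f x = g x}"

text \<open>For the fixed-point set of a homeomorphism of \<open>[0, 1]\<close>, its border consists of the
  endpoints of the orbitals.\<close>
definition border :: "real set \<Rightarrow> real set" where
  "border S = S \<inter> closure ({0..1} - S)"

lemma agree_subset: "agree f g \<subseteq> {0..1}"
  by (auto simp: agree_def)

lemma closed_agree:
  assumes "continuous_on {0..1} f" "continuous_on {0..1} g"
  shows "closed (agree f g)"
proof -
  have "closed {x \<in> {0..1}. f x - g x = 0}"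
    using assms by (intro continuous_closed_preimage_constant continuous_on_diff) auto
  thus ?thesis by (simp add: agree_def)
qed

lemma border_image_subset:
  assumes "continuous_on {0..1} h" "h ` {0..1} \<subseteq> {0..1}" "S \<subseteq> {0..1}"
    and "\<And>x. x \<in> {0..1} \<Longrightarrow> x \<in> S \<longleftrightarrow> h x \<in> T"
  shows "h ` border S \<subseteq> border T"
proof -
  have "closure ({0..1} - S) \<subseteq> {0..1}"
    by (simp add: closure_minimal)
  moreover have "h ` ({0..1} - S) \<subseteq> closure ({0..1} - T)"
    using assms(2,4) closure_subset by fastforce
  ultimately have "h ` closure ({0..1} - S) \<subseteq> closure ({0..1} - T)"
    by (intro image_closure_subset continuous_on_subset[OF assms(1)]) auto
  moreover have "h ` S \<subseteq> T" using assms(3,4) by auto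
  ultimately show ?thesis unfolding border_def by blast
qed

lemma finite_border_preimage:
  assumes "continuous_on {0..1} h" "h ` {0..1} \<subseteq> {0..1}" "inj_on h {0..1}" "S \<subseteq> {0..1}"
    and "\<And>x. x \<in> {0..1} \<Longrightarrow> x \<in> S \<longleftrightarrow> h x \<in> T" and "finite (border T)"
  shows "finite (border S)"
proof (rule inj_on_finite)
  show "inj_on h (border S)"
    by (rule inj_on_subset[OF assms(3)]) (use assms(4) in \<open>auto simp: border_def\<close>)
qed (use border_image_subset[OF assms(1,2,4,5)] assms(6) in auto)

lemma border_between:
  assumes "closed S" "S \<subseteq> {0..1}" "z \<in> S" "y \<in> {0..1} - S"
  obtains e where "e \<in> border S" "min z y \<le> e" "e \<le> max z y"
proof -
  let ?I = "{min z y..max z y}" and ?R = "closure ({0..1} - S)"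
  have "?I \<subseteq> {0..1}" using assms by auto
  hence "?I \<subseteq> S \<union> ?R" using closure_subset by blast
  moreover have "S \<inter> ?I \<noteq> {}" using assms(3) by auto
  moreover have "y \<in> ?R \<inter> ?I" using assms(4) closure_subset[of "{0..1} - S"] by auto
  moreover have "connected ?I" by simp
  ultimately have "S \<inter> ?R \<inter> ?I \<noteq> {}"
    using assms(1) unfolding connected_closed by blast
  then obtain e where "e \<in> S \<inter> ?R" "e \<in> ?I" by blast
  thus ?thesis by (intro that) (auto simp: border_def)
qed

lemma closed_greatest_below:
  fixes C :: "real set"
  assumes "closed C" "x \<in> C" "x \<le> b"
  obtains m where "m \<in> C" "x \<le> m" "m \<le> b" "\<And>y. y \<in> C \<Longrightarrow> y \<le> b \<Longrightarrow> y \<le> m"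
proof -
  let ?D = "C \<inter> {x..b}"
  have D: "closed ?D" "?D \<noteq> {}" "bdd_above ?D" using assms by auto
  have "Sup ?D \<in> ?D" by (rule closed_contains_Sup) (use D in auto)
  moreover have "y \<le> Sup ?D" if "y \<in> C" "y \<le> b" for y
  proof (cases "x \<le> y")
    case True thus ?thesis using that D cSup_upper[of y ?D] by auto
  next
    case False thus ?thesis using \<open>Sup ?D \<in> ?D\<close> by auto
  qed
  ultimately show ?thesis using that by auto
qed

lemma closed_least_above:
  fixes C :: "real set"
  assumes "closed C" "x \<in> C" "b \<le> x"
  obtains m where "m \<in> C" "b \<le> m" "m \<le> x" "\<And>y. y \<in> C \<Longrightarrow> b \<le> y \<Longrightarrow> m \<le> y"
proof -
  let ?D = "C \<inter> {b..x}"
  have D: "closed ?D" "?D \<noteq> {}" "bdd_below ?D" using assms by auto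
  have "Inf ?D \<in> ?D" by (rule closed_contains_Inf) (use D in auto)
  moreover have "Inf ?D \<le> y" if "y \<in> C" "b \<le> y" for y
  proof (cases "y \<le> x")
    case True thus ?thesis using that D cInf_lower[of y ?D] by auto
  next
    case False thus ?thesis using \<open>Inf ?D \<in> ?D\<close> by auto
  qed
  ultimately show ?thesis using that by auto
qed

lemma border_gap_around:
  assumes "closed C" "C \<subseteq> {0..1}" "0 \<in> C" "1 \<in> C" "m \<in> {0..1} - C"
  obtains u v where "u < m" "m < v" "u \<in> border C" "v \<in> border C"
    "\<And>x. x \<in> C \<Longrightarrow> x \<le> u \<or> v \<le> x"
proof -
  obtain u where u: "u \<in> C" "u \<le> m" and below: "\<And>x. x \<in> C \<Longrightarrow> x \<le> m \<Longrightarrow> x \<le> u"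
    using closed_greatest_below[OF assms(1,3), of m] assms(5) by auto
  obtain v where v: "v \<in> C" "m \<le> v" and above: "\<And>x. x \<in> C \<Longrightarrow> m \<le> x \<Longrightarrow> v \<le> x"
    using closed_least_above[OF assms(1,4), of m] assms(5) by auto
  have um: "u < m" and mv: "m < v" using u v assms(5) by (auto simp: le_less)
  have gap: "{u<..<v} \<subseteq> {0..1} - C"
    using below above u v assms(2) by (force simp: not_le)
  have "u \<in> closure ({0..1} - C)"
    unfolding closure_approachable
  proof (intro allI impI)
    fix \<epsilon> :: real assume "\<epsilon> > 0"
    hence "min (u + \<epsilon>/2) m \<in> {u<..<v}" "dist (min (u + \<epsilon>/2) m) u < \<epsilon>"
      using um mv by (auto simp: dist_real_def)
    thus "\<exists>y\<in>{0..1} - C. dist y u < \<epsilon>" using gap by blast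
  qed
  moreover have "v \<in> closure ({0..1} - C)"
    unfolding closure_approachable
  proof (intro allI impI)
    fix \<epsilon> :: real assume "\<epsilon> > 0"
    hence "max (v - \<epsilon>/2) m \<in> {u<..<v}" "dist (max (v - \<epsilon>/2) m) v < \<epsilon>"
      using um mv by (auto simp: dist_real_def)
    thus "\<exists>y\<in>{0..1} - C. dist y v < \<epsilon>" using gap by blast
  qed
  moreover have "x \<le> u \<or> v \<le> x" if "x \<in> C" for x
    using below above that by force
  ultimately show ?thesis using that um mv u v unfolding border_def by blast
qed

lemma strict_mono_on_fixes_finite_invariant:
  fixes g :: "real \<Rightarrow> real"
  assumes "strict_mono_on A g" "finite S" "S \<subseteq> A" "g ` S \<subseteq> S" "x \<in> S"
  shows "g x = x"
proof (rule ccontr)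
  assume "g x \<noteq> x"
  define s where "s n = (g ^^ n) x" for n
  have s_in: "s n \<in> S" for n by (induction n) (use assms(4,5) in \<open>auto simp: s_def\<close>)
  have s_Suc: "s (Suc n) = g (s n)" for n by (simp add: s_def)
  have step: "s n < s (Suc n) \<Longrightarrow> s (Suc n) < s (Suc (Suc n))"
    and step': "s (Suc n) < s n \<Longrightarrow> s (Suc (Suc n)) < s (Suc n)" for n
    using strict_mono_on_less[OF assms(1)] s_in assms(3) s_Suc by (metis subsetD)+
  have "strict_mono s \<or> strict_mono (\<lambda>n. - s n)"
  proof (cases "x < g x")
    case True
    have "s n < s (Suc n)" for n by (induction n) (use True step in \<open>auto simp: s_def\<close>)
    thus ?thesis by (simp add: strict_mono_Suc_iff)
  next
    case False
    hence "g x < x" using \<open>g x \<noteq> x\<close> by simp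
    have "s (Suc n) < s n" for n by (induction n) (use \<open>g x < x\<close> step' in \<open>auto simp: s_def\<close>)
    thus ?thesis by (simp add: strict_mono_Suc_iff)
  qed
  hence "inj s"
  proof
    assume "strict_mono s"
    thus "inj s" by (rule strict_mono_imp_inj_on)
  next
    assume "strict_mono (\<lambda>n. - s n)"
    hence "inj (\<lambda>n. - s n)" by (rule strict_mono_imp_inj_on)
    thus "inj s" by (simp add: inj_on_def)
  qed
  moreover have "range s \<subseteq> S" using s_in by auto
  ultimately show False using assms(2) inj_on_finite infinite_UNIV_nat by blast
qed

definition affine_off :: "real set \<Rightarrow> (real \<Rightarrow> real) \<Rightarrow> bool" where
  "affine_off T f \<longleftrightarrow> (\<forall>x y. 0 \<le> x \<longrightarrow> x < y \<longrightarrow> y \<le> 1 \<longrightarrow> {x<..<y} \<inter> T = {} \<longrightarrow>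
     (\<exists>m k. \<forall>t\<in>{x..y}. f t = m * t + k))"

lemma affine_offE:
  assumes "affine_off T f" "0 \<le> x" "x < y" "y \<le> 1" "{x<..<y} \<inter> T = {}"
  obtains m k where "\<forall>t\<in>{x..y}. f t = m * t + k"
  using assms unfolding affine_off_def by blast

lemma affine_off_id: "affine_off T id"
  unfolding affine_off_def by (intro allI impI exI[of _ 1] exI[of _ 0]) simp

lemma affine_off_mono: "T \<subseteq> T' \<Longrightarrow> affine_off T f \<Longrightarrow> affine_off T' f"
  unfolding affine_off_def by blast

lemma PL0_affine_off:
  assumes "PL0 f"
  obtains T where "finite T" "affine_off T f"
proof -
  obtain ts :: "real list" where "sorted_wrt (<) ts" and n2: "length ts \<ge> 2"
    and ts_hd: "hd ts = 0" and ts_last: "last ts = 1"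
    and lin: "\<forall>i < length ts - 1. \<exists>m k. \<forall>x \<in> {ts!i..ts!(i+1)}. f x = m * x + k"
    using assms unfolding PL0_def by blast
  let ?n = "length ts"
  have t0: "ts!0 = 0" using ts_hd n2 by (cases ts) auto
  have tn: "ts!(?n - 1) = 1" using ts_last n2 by (cases ts rule: rev_cases) (auto simp: nth_append)
  have "affine_off (set ts) f"
    unfolding affine_off_def
  proof (intro allI impI)
    fix x y :: real assume x: "0 \<le> x" and xy: "x < y" and y: "y \<le> 1"
      and free: "{x<..<y} \<inter> set ts = {}"
    define I where "I = {i. i < ?n - 1 \<and> ts!i \<le> x}"
    have "finite I" "0 \<in> I" using n2 t0 x by (auto simp: I_def)
    define i where "i = Max I"
    have "i \<in> I" using \<open>finite I\<close> \<open>0 \<in> I\<close> Max_in i_def by blast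
    hence i: "i < ?n - 1" "ts!i \<le> x" by (auto simp: I_def)
    have "x < ts!(i+1)"
    proof (cases "i + 1 < ?n - 1")
      case True
      have "i + 1 \<notin> I" using Max_ge[OF \<open>finite I\<close>] i_def by fastforce
      thus ?thesis using True by (auto simp: I_def)
    next
      case False
      hence "i + 1 = ?n - 1" using i(1) by linarith
      thus ?thesis using tn xy y by simp
    qed
    moreover have "ts!(i+1) \<in> set ts" using i(1) by simp
    ultimately have "y \<le> ts!(i+1)" using free by (metis disjoint_iff greaterThanLessThan_iff not_le)
    moreover obtain m k where "\<forall>t \<in> {ts!i..ts!(i+1)}. f t = m * t + k" using lin i(1) by blast
    ultimately show "\<exists>m k. \<forall>t\<in>{x..y}. f t = m * t + k" using i(2) by auto
  qed
  thus ?thesis using that by blast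
qed

lemma nearest_points_around:
  fixes T :: "real set"
  assumes "finite T" "0 < e" "e < 1" "e \<notin> T"
  defines "l \<equiv> Max (insert 0 {t\<in>T. 0 \<le> t \<and> t < e})"
    and "r \<equiv> Min (insert 1 {t\<in>T. e < t \<and> t \<le> 1})"
  shows "0 \<le> l" "l < e" "e < r" "r \<le> 1" "{l<..<r} \<inter> T = {}"
proof -
  have fin: "finite (insert 0 {t\<in>T. 0 \<le> t \<and> t < e})" "finite (insert 1 {t\<in>T. e < t \<and> t \<le> 1})"
    using assms(1) by auto
  show "0 \<le> l" unfolding l_def using fin(1) by simp
  show "l < e" unfolding l_def using fin(1) assms(2) by simp
  show "e < r" unfolding r_def using fin(2) assms(3) by simp
  show "r \<le> 1" unfolding r_def using fin(2) by simp
  show "{l<..<r} \<inter> T = {}"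
  proof (intro equalityI subsetI)
    fix t assume t: "t \<in> {l<..<r} \<inter> T"
    have "0 \<le> l" "r \<le> 1" unfolding l_def r_def using fin by simp_all
    moreover have "t \<le> l" if "0 \<le> t" "t < e" using t that fin(1) unfolding l_def by simp
    moreover have "r \<le> t" if "e < t" "t \<le> 1" using t that fin(2) unfolding r_def by simp
    ultimately show "t \<in> {}" using t assms(4) by (cases t e rule: linorder_cases) auto
  qed simp
qed

lemma border_agree_affine_unique:
  assumes "0 \<le> l" "r \<le> 1" "\<forall>t\<in>{l..r}. f t = m * t + k" "\<forall>t\<in>{l..r}. g t = m' * t + k'"
    and e: "e \<in> border (agree f g)" "e \<in> {l<..<r}" and e': "e' \<in> {l..r}" "f e' = g e'"
  shows "e' = e"
proof (rule ccontr)
  assume "e' \<noteq> e"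
  have "m * e + k = m' * e + k'" "m * e' + k = m' * e' + k'"
    using assms e e' by (auto simp: border_def agree_def)
  hence "(m - m') * (e - e') = 0" by (simp add: algebra_simps)
  hence "m = m'" "k = k'" using \<open>e' \<noteq> e\<close> \<open>m * e + k = m' * e + k'\<close> by auto
  hence "{l<..<r} \<subseteq> agree f g" using assms(1-4) by (auto simp: agree_def)
  moreover have "e \<in> closure ({0..1} - agree f g)" "min (e - l) (r - e) > 0"
    using e by (auto simp: border_def)
  then obtain y where "y \<in> {0..1} - agree f g" "dist y e < min (e - l) (r - e)"
    unfolding closure_approachable by blast
  hence "y \<in> {l<..<r}" by (auto simp: dist_real_def)
  ultimately show False using \<open>y \<in> {0..1} - agree f g\<close> by blast
qed

text \<open>A border point \<open>e \<notin> T\<close> is the only zero of the affine function \<open>f - g\<close> between its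
  neighbours \<open>lo e\<close>, \<open>hi e\<close> in \<open>T\<close>, so \<open>e \<mapsto> (lo e, hi e)\<close> is injective.\<close>
lemma finite_border_agree:
  assumes "finite T" "affine_off T f" "affine_off T g"
  shows "finite (border (agree f g))"
proof -
  define lo where "lo e = Max (insert 0 {t\<in>T. 0 \<le> t \<and> t < e})" for e
  define hi where "hi e = Min (insert 1 {t\<in>T. e < t \<and> t \<le> 1})" for e
  let ?B = "border (agree f g) - insert 0 (insert 1 T)"
  have B: "0 \<le> lo e" "lo e < e" "e < hi e" "hi e \<le> 1" "{lo e<..<hi e} \<inter> T = {}"
    if "e \<in> ?B" for e
    using nearest_points_around[OF assms(1), of e] that
    by (auto simp: lo_def hi_def border_def agree_def le_less)
  have "inj_on (\<lambda>e. (lo e, hi e)) ?B"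
  proof (rule inj_onI)
    fix e e' assume e: "e \<in> ?B" and e': "e' \<in> ?B" and same: "(lo e, hi e) = (lo e', hi e')"
    have "lo e < hi e" using B[OF e] by linarith
    obtain m k where f: "\<forall>t\<in>{lo e..hi e}. f t = m * t + k"
      using affine_offE[OF assms(2) B(1)[OF e] \<open>lo e < hi e\<close> B(4,5)[OF e]] .
    obtain m' k' where g: "\<forall>t\<in>{lo e..hi e}. g t = m' * t + k'"
      using affine_offE[OF assms(3) B(1)[OF e] \<open>lo e < hi e\<close> B(4,5)[OF e]] .
    have "e \<in> border (agree f g)" "e \<in> {lo e<..<hi e}" using e B[OF e] by auto
    moreover have "e' \<in> {lo e..hi e}" using same B[OF e'] by auto
    moreover have "f e' = g e'" using e' by (auto simp: border_def agree_def)
    ultimately show "e = e'"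
      using border_agree_affine_unique[OF B(1,4)[OF e] f g] by blast
  qed
  moreover have "(\<lambda>e. (lo e, hi e)) ` ?B \<subseteq> insert 0 T \<times> insert 1 T"
  proof -
    have "lo e \<in> insert 0 {t\<in>T. 0 \<le> t \<and> t < e}" "hi e \<in> insert 1 {t\<in>T. e < t \<and> t \<le> 1}" for e
      unfolding lo_def hi_def using assms(1) by (intro Max_in Min_in; simp)+
    thus ?thesis by blast
  qed
  ultimately have "finite ?B" using assms(1) inj_on_finite by blast
  moreover have "border (agree f g) \<subseteq> ?B \<union> insert 0 (insert 1 T)" by blast
  ultimately show ?thesis using assms(1) by (meson finite_Un finite_insert finite_subset)
qed

definition incr_embedding :: "(real \<Rightarrow> real) \<Rightarrow> bool" where
  "incr_embedding g \<longleftrightarrow>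
     continuous_on {0..1} g \<and> g ` {0..1} \<subseteq> {0..1} \<and> strict_mono_on {0..1} g"

lemma incr_embeddingD:
  assumes "incr_embedding g"
  shows "continuous_on {0..1} g" "g ` {0..1} \<subseteq> {0..1}" "inj_on g {0..1}" "strict_mono_on {0..1} g"
  using assms strict_mono_on_imp_inj_on by (auto simp: incr_embedding_def)

lemma incr_embedding_comp:
  assumes "incr_embedding g" "incr_embedding h"
  shows "incr_embedding (g \<circ> h)"
  using assms unfolding incr_embedding_def strict_mono_on_def
  by (auto intro!: continuous_on_compose2[of "{0..1}" g "{0..1}" h] simp: image_subset_iff)

lemma commuting_fixes_border:
  assumes g: "incr_embedding g" and k: "k ` {0..1} \<subseteq> {0..1}"
    and comm: "\<And>x. x \<in> {0..1} \<Longrightarrow> g (k x) = k (g x)"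
    and fin: "finite (border (agree k id))" and w: "w \<in> border (agree k id)"
  shows "g w = w"
proof -
  have g01: "g ` {0..1} \<subseteq> {0..1}" and mono: "strict_mono_on {0..1} g"
    using g by (auto simp: incr_embedding_def)
  have "x \<in> agree k id \<longleftrightarrow> g x \<in> agree k id" if x: "x \<in> {0..1}" for x
  proof -
    have "k x \<in> {0..1}" "g x \<in> {0..1}" using x k g01 by blast+
    hence "g (k x) = g x \<longleftrightarrow> k x = x"
      using strict_mono_on_eqD[OF mono] x by metis
    thus ?thesis using comm[OF x] x \<open>g x \<in> {0..1}\<close> by (auto simp: agree_def)
  qed
  hence "g ` border (agree k id) \<subseteq> border (agree k id)"
    using g by (intro border_image_subset) (auto simp: incr_embedding_def agree_def)
  moreover have "border (agree k id) \<subseteq> {0..1}" by (auto simp: border_def agree_def)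
  ultimately show ?thesis
    using strict_mono_on_fixes_finite_invariant[OF mono fin] w by blast
qed

abbreviation inv01 :: "(real \<Rightarrow> real) \<Rightarrow> real \<Rightarrow> real" where
  "inv01 f \<equiv> inv_into {0..1} f"

lemma PL0_incr_embedding:
  assumes "PL0 f" shows "incr_embedding f"
proof -
  have mono: "strict_mono_on {0..1} f" and "f 0 = 0" "f 1 = 1"
    using assms by (auto simp: PL0_def)
  have "f x \<in> {0..1}" if "x \<in> {0..1}" for x
    using strict_mono_on_leD[OF mono, of 0 x] strict_mono_on_leD[OF mono, of x 1] that
      \<open>f 0 = 0\<close> \<open>f 1 = 1\<close> by auto
  thus ?thesis using assms by (auto simp: PL0_def incr_embedding_def)
qed

lemma PL0_image:
  assumes "PL0 f" shows "f ` {0..1} = {0..1}"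
proof
  show "f ` {0..1} \<subseteq> {0..1}" using PL0_incr_embedding[OF assms] by (simp add: incr_embedding_def)
  show "{0..1} \<subseteq> f ` {0..1}"
  proof
    fix y :: real assume "y \<in> {0..1}"
    then obtain x where "0 \<le> x" "x \<le> 1" "f x = y"
      using IVT'[of f 0 y 1] assms by (auto simp: PL0_def)
    thus "y \<in> f ` {0..1}" by auto
  qed
qed

lemma PL0_in_unit: "PL0 f \<Longrightarrow> x \<in> {0..1} \<Longrightarrow> f x \<in> {0..1}"
  using PL0_image by blast

lemma PL0_strict_mono: "PL0 f \<Longrightarrow> strict_mono_on {0..1} f"
  by (simp add: PL0_def)

lemmas PL0_less_iff = strict_mono_on_less[OF PL0_strict_mono]
lemmas PL0_le_iff = strict_mono_on_less_eq[OF PL0_strict_mono]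
lemmas PL0_eq_iff = strict_mono_on_eq[OF PL0_strict_mono]

lemma PL0_inv_in_unit: "PL0 f \<Longrightarrow> y \<in> {0..1} \<Longrightarrow> inv01 f y \<in> {0..1}"
  by (simp add: PL0_image inv_into_into del: atLeastAtMost_iff)

lemma PL0_f_inv: "PL0 f \<Longrightarrow> y \<in> {0..1} \<Longrightarrow> f (inv01 f y) = y"
  by (simp add: PL0_image f_inv_into_f)

lemma PL0_inv_eq_iff:
  assumes "PL0 f" "y \<in> {0..1}" "x \<in> {0..1}"
  shows "inv01 f y = x \<longleftrightarrow> y = f x"
proof -
  have "inj_on f {0..1}" using assms(1) by (simp add: PL0_strict_mono strict_mono_on_imp_inj_on)
  thus ?thesis using PL0_f_inv[OF assms(1,2)] inv_into_f_f[of f "{0..1}" x] assms(3) by auto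
qed

lemma PL0_inv_incr_embedding:
  assumes "PL0 f" shows "incr_embedding (inv01 f)"
proof -
  have "continuous_on (f ` {0..1}) (inv01 f)"
    using assms PL0_eq_iff[OF assms]
    by (intro continuous_on_inv) (auto simp: PL0_def inj_on_def)
  moreover have "strict_mono_on {0..1} (inv01 f)"
  proof (rule strict_mono_onI)
    fix x y :: real assume "x \<in> {0..1}" "y \<in> {0..1}" "x < y"
    moreover have "f (inv01 f x) < f (inv01 f y) \<longleftrightarrow> inv01 f x < inv01 f y"
      using PL0_less_iff[OF assms] PL0_inv_in_unit[OF assms] \<open>x \<in> {0..1}\<close> \<open>y \<in> {0..1}\<close> by blast
    ultimately show "inv01 f x < inv01 f y" using PL0_f_inv[OF assms] by simp
  qed
  ultimately show ?thesis
    using PL0_inv_in_unit[OF assms] by (auto simp: incr_embedding_def PL0_image[OF assms])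
qed

lemma orbital_endpoints:
  assumes "orbital f {a<..<c}"
  shows "a < c" "0 \<le> a" "c \<le> 1" "f a = a" "f c = c"
proof -
  have C: "{a<..<c} \<in> components (Supp f)" using assms by (simp add: orbital_def)
  hence sub: "{a<..<c} \<subseteq> Supp f" by (rule in_components_subset)
  show ac: "a < c" using in_components_nonempty[OF C] by simp
  have "closure {a<..<c} \<subseteq> {0..1}"
    using sub by (intro closure_minimal) (auto simp: Supp_def)
  thus a0: "0 \<le> a" and c1: "c \<le> 1" using ac by auto
  show "f a = a"
  proof (rule ccontr)
    assume "f a \<noteq> a"
    hence "a \<in> Supp f" using a0 ac c1 by (simp add: Supp_def)
    moreover have "{a..<c} = insert a {a<..<c}" using ac by auto
    ultimately have "{a..<c} \<subseteq> Supp f" using sub by simp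
    moreover have "{a<..<c} \<inter> {a..<c} \<noteq> {}" using dense[OF ac] by force
    ultimately have "{a..<c} \<subseteq> {a<..<c}" using components_maximal[OF C] by simp
    thus False using ac by auto
  qed
  show "f c = c"
  proof (rule ccontr)
    assume "f c \<noteq> c"
    hence "c \<in> Supp f" using a0 ac c1 by (simp add: Supp_def)
    moreover have "{a<..c} = insert c {a<..<c}" using ac by auto
    ultimately have "{a<..c} \<subseteq> Supp f" using sub by simp
    moreover have "{a<..<c} \<inter> {a<..c} \<noteq> {}" using dense[OF ac] by force
    ultimately have "{a<..c} \<subseteq> {a<..<c}" using components_maximal[OF C] by simp
    thus False using ac by auto
  qed
qed

locale standard_pair =
  fixes f0 f1 :: "real \<Rightarrow> real"
  assumes PL0_f0: "PL0 f0" and PL0_f1: "PL0 f1" and standard: "standard_F f0 f1"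
begin

text \<open>These rules need their side conditions in the form \<open>x \<in> {0..1}\<close>, which is why several
  proofs below remove \<open>atLeastAtMost_iff\<close> from the simplifier.\<close>
lemmas in_unit [simp] =
  PL0_in_unit[OF PL0_f0] PL0_in_unit[OF PL0_f1] PL0_inv_in_unit[OF PL0_f0] PL0_inv_in_unit[OF PL0_f1]
lemmas mono_iff [simp] =
  PL0_less_iff[OF PL0_f0] PL0_less_iff[OF PL0_f1] PL0_le_iff[OF PL0_f0] PL0_le_iff[OF PL0_f1]
  PL0_eq_iff[OF PL0_f0] PL0_eq_iff[OF PL0_f1] PL0_inv_eq_iff[OF PL0_f0] PL0_inv_eq_iff[OF PL0_f1]
lemmas inv_cancel [simp] = PL0_f_inv[OF PL0_f0] PL0_f_inv[OF PL0_f1]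

lemma relator_acts_trivially:
  assumes "r \<in> F_relators" "t \<in> {0..1}"
  shows "word_act f0 f1 r t = t"
proof -
  have "Feq r []" using Feq_rel[OF assms(1), of "[]" "[]"] by simp
  thus ?thesis using standard assms(2) unfolding standard_F_def by blast
qed

text \<open>The relators say that \<open>x\<^sub>0 x\<^sub>1\<^sup>-\<^sup>1\<close> commutes with \<open>x\<^sub>0\<^sup>-\<^sup>1 x\<^sub>1 x\<^sub>0\<close> and with
  \<open>x\<^sub>0\<^sup>-\<^sup>2 x\<^sub>1 x\<^sub>0\<^sup>2\<close>; conjugating by \<open>x\<^sub>0\<^sup>-\<^sup>1\<close> resp. \<open>x\<^sub>0\<^sup>-\<^sup>2\<close>, \<open>x\<^sub>1\<close> commutes with
  \<open>x\<^sub>0\<^sup>2 x\<^sub>1\<^sup>-\<^sup>1 x\<^sub>0\<^sup>-\<^sup>1\<close> and with \<open>x\<^sub>0\<^sup>3 x\<^sub>1\<^sup>-\<^sup>1 x\<^sub>0\<^sup>-\<^sup>2\<close> (acting on the right).\<close>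
lemma commute_first_relator:
  assumes "x \<in> {0..1}"
  shows "inv01 f0 (inv01 f1 (f0 (f0 (f1 x)))) = f1 (inv01 f0 (inv01 f1 (f0 (f0 x))))"
proof -
  have "word_act f0 f1 (wcomm (X0 @ winv X1) (wconj X1 X0)) (f0 x) = f0 x"
    using assms by (intro relator_acts_trivially) (simp_all add: F_relators_def del: atLeastAtMost_iff)
  hence "f0 (inv01 f1 (inv01 f0 (inv01 f0 (f1 (f0 (f1 (inv01 f0 (inv01 f1 (f0 (f0 x)))))))))) = f0 x"
    by (simp add: wcomm_def wconj_def winv_def X0_def X1_def letter_act_def)
  thus ?thesis using assms by (simp del: atLeastAtMost_iff)
qed

lemma commute_second_relator:
  assumes "x \<in> {0..1}"
  shows "inv01 f0 (inv01 f0 (inv01 f1 (f0 (f0 (f0 (f1 x)))))) =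
         f1 (inv01 f0 (inv01 f0 (inv01 f1 (f0 (f0 (f0 x))))))"
proof -
  have "word_act f0 f1 (wcomm (X0 @ winv X1) (wconj X1 (X0 @ X0))) (f0 (f0 x)) = f0 (f0 x)"
    using assms by (intro relator_acts_trivially) (simp_all add: F_relators_def del: atLeastAtMost_iff)
  hence "f0 (f0 (inv01 f1 (inv01 f0 (inv01 f0 (inv01 f0 (f1 (f0 (f0 (f1
           (inv01 f0 (inv01 f0 (inv01 f1 (f0 (f0 (f0 x))))))))))))))) = f0 (f0 x)"
    by (simp add: wcomm_def wconj_def winv_def X0_def X1_def letter_act_def)
  thus ?thesis using assms by (simp del: atLeastAtMost_iff)
qed

lemma border_fix_f1_agree:
  assumes "w \<in> border (agree f1 id)"
  shows "f0 (f0 w) = f1 (f0 w)"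
proof -
  obtain T where "finite T" "affine_off T f1" using PL0_affine_off[OF PL0_f1] .
  hence fin: "finite (border (agree f1 id))" using finite_border_agree affine_off_id by blast
  let ?g = "inv01 f0 \<circ> inv01 f1 \<circ> f0 \<circ> f0"
  have g: "incr_embedding ?g"
    by (intro incr_embedding_comp PL0_incr_embedding PL0_inv_incr_embedding PL0_f0 PL0_f1)
  have "?g w = w"
    by (rule commuting_fixes_border[OF g _ _ fin assms])
      (simp_all add: PL0_image[OF PL0_f1] commute_first_relator del: atLeastAtMost_iff)
  moreover have "w \<in> {0..1}" using assms by (auto simp: border_def agree_def)
  ultimately show ?thesis by (simp del: atLeastAtMost_iff)
qed

lemma fixed_point_between:
  assumes "z \<in> {0..1}" "y \<in> {0..1}"
    and "f0 (f0 (f0 z)) = f1 (f0 (f0 z))" "f0 (f0 (f0 y)) \<noteq> f1 (f0 (f0 y))"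
  obtains e where "min z y \<le> e" "e \<le> max z y" "f1 e = e"
proof -
  let ?h = "inv01 f0 \<circ> inv01 f0 \<circ> inv01 f1 \<circ> f0 \<circ> f0 \<circ> f0"
  have h: "incr_embedding ?h"
    by (intro incr_embedding_comp PL0_incr_embedding PL0_inv_incr_embedding PL0_f0 PL0_f1)
  have f00: "incr_embedding (f0 \<circ> f0)"
    by (intro incr_embedding_comp PL0_incr_embedding PL0_f0)
  have S: "x \<in> agree ?h id \<longleftrightarrow> (f0 \<circ> f0) x \<in> agree f0 f1" if "x \<in> {0..1}" for x
    using that by (simp add: agree_def del: atLeastAtMost_iff)
  obtain T0 where T0: "finite T0" "affine_off T0 f0" using PL0_affine_off[OF PL0_f0] .
  obtain T1 where T1: "finite T1" "affine_off T1 f1" using PL0_affine_off[OF PL0_f1] .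
  have "affine_off (T0 \<union> T1) f0" "affine_off (T0 \<union> T1) f1"
    by (rule affine_off_mono[OF Un_upper1 T0(2)], rule affine_off_mono[OF Un_upper2 T1(2)])
  hence "finite (border (agree f0 f1))"
    using finite_border_agree[of "T0 \<union> T1" f0 f1] T0(1) T1(1) by simp
  hence fin: "finite (border (agree ?h id))"
    using finite_border_preimage[OF incr_embeddingD(1-3)[OF f00] agree_subset, where T = "agree f0 f1"] S
    by blast
  have "closed (agree ?h id)"
    by (rule closed_agree[OF incr_embeddingD(1)[OF h] continuous_on_id'])
  moreover have "z \<in> agree ?h id" "y \<in> {0..1} - agree ?h id"
    using S[OF assms(1)] S[OF assms(2)] assms by (simp_all add: agree_def del: atLeastAtMost_iff)
  ultimately obtain e where e: "e \<in> border (agree ?h id)" "min z y \<le> e" "e \<le> max z y"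
    using border_between agree_subset by metis
  have "f1 e = e"
  proof (rule commuting_fixes_border[OF PL0_incr_embedding[OF PL0_f1] _ _ fin e(1)])
    show "?h ` {0..1} \<subseteq> {0..1}" by (rule incr_embeddingD(2)[OF h])
    show "f1 (?h x) = ?h (f1 x)" if "x \<in> {0..1}" for x
      using commute_second_relator[OF that] by (simp only: comp_apply)
  qed
  thus ?thesis using that e by blast
qed

lemma f1_gap_around:
  assumes "m \<in> {0..1}" "f1 m \<noteq> m"
  obtains u v where "u < m" "m < v" "u \<in> {0..1}" "v \<in> {0..1}" "f1 u = u" "f1 v = v"
    "\<And>x. x \<in> {u<..<v} \<Longrightarrow> f1 x \<noteq> x"
    "\<And>x. x \<in> {0..1} \<Longrightarrow> f1 x = x \<Longrightarrow> x \<le> u \<or> v \<le> x"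
    "f0 (f0 u) = f1 (f0 u)" "f0 (f0 v) = f1 (f0 v)"
proof -
  have C: "closed (agree f1 id)"
    using PL0_f1 closed_agree[OF _ continuous_on_id'] by (simp add: PL0_def)
  have "0 \<in> agree f1 id" "1 \<in> agree f1 id" "m \<in> {0..1} - agree f1 id"
    using PL0_f1 assms by (auto simp: PL0_def agree_def)
  then obtain u v where uv: "u < m" "m < v" "u \<in> border (agree f1 id)" "v \<in> border (agree f1 id)"
      and out: "\<And>x. x \<in> agree f1 id \<Longrightarrow> x \<le> u \<or> v \<le> x"
    using border_gap_around[OF C agree_subset] by blast
  show ?thesis
  proof (rule that[OF uv(1,2)])
    show "u \<in> {0..1}" "v \<in> {0..1}" "f1 u = u" "f1 v = v"
      using uv(3,4) by (auto simp: border_def agree_def)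
    show "x \<le> u \<or> v \<le> x" if "x \<in> {0..1}" "f1 x = x" for x
      using out that by (simp add: agree_def)
    have "{u<..<v} \<subseteq> {0..1}" using uv(3,4) by (auto simp: border_def agree_def)
    thus "f1 x \<noteq> x" if "x \<in> {u<..<v}" for x
      using out[of x] that by (auto simp: agree_def)
    show "f0 (f0 u) = f1 (f0 u)" "f0 (f0 v) = f1 (f0 v)"
      using border_fix_f1_agree uv(3,4) by blast+
  qed
qed

lemma gap_agreement_constant:
  assumes gap: "\<And>x. x \<in> {u<..<v} \<Longrightarrow> f1 x \<noteq> x" and "0 \<le> u" "v \<le> 1"
    and "z \<in> {u<..<v}" "y \<in> {u<..<v}" "f0 (f0 (f0 z)) = f1 (f0 (f0 z))"
  shows "f0 (f0 (f0 y)) = f1 (f0 (f0 y))"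
proof (rule ccontr)
  assume "f0 (f0 (f0 y)) \<noteq> f1 (f0 (f0 y))"
  moreover have "z \<in> {0..1}" "y \<in> {0..1}" using assms by auto
  ultimately obtain e where "min z y \<le> e" "e \<le> max z y" "f1 e = e"
    using fixed_point_between assms(6) by blast
  thus False using gap[of e] assms(4,5) by (auto simp: min_def max_def split: if_splits)
qed

lemma gap_straddle_contradiction:
  assumes gap: "\<And>x. x \<in> {u<..<v} \<Longrightarrow> f1 x \<noteq> x" and "0 \<le> u" "u < v" "v \<le> 1"
    and w: "f0 (f0 w) = f1 (f0 w)" "f0 u < w" "w < f0 v"
    and b: "b \<in> {0..1}" "f0 (f0 u) < b" "b < f0 (f0 v)" "f0 b \<noteq> f1 b"
  shows False
proof -
  have uv01: "u \<in> {0..1}" "v \<in> {0..1}" using assms(2-4) by auto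
  hence w01: "w \<in> {0..1}" using w(2,3) in_unit(1)[of u] in_unit(1)[of v] by fastforce
  define z where "z = inv01 f0 w"
  define y where "y = inv01 f0 (inv01 f0 b)"
  have z01: "z \<in> {0..1}" and y01: "y \<in> {0..1}" and fz: "f0 z = w" and fy: "f0 (f0 y) = b"
    using w01 b(1) by (simp_all add: z_def y_def del: atLeastAtMost_iff)
  have "f0 u < f0 z" "f0 z < f0 v" using w(2,3) fz by simp_all
  hence "z \<in> {u<..<v}" using z01 uv01 by (simp del: atLeastAtMost_iff)
  moreover have "f0 (f0 u) < f0 (f0 y)" "f0 (f0 y) < f0 (f0 v)" using b(2,3) fy by simp_all
  hence "y \<in> {u<..<v}" using y01 uv01 by (simp del: atLeastAtMost_iff)
  moreover have "f0 (f0 (f0 z)) = f1 (f0 (f0 z))" using fz w(1) by simp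
  ultimately have "f0 (f0 (f0 y)) = f1 (f0 (f0 y))"
    using gap_agreement_constant[OF gap assms(2,4)] by blast
  thus False using fy b(4) by simp
qed

lemma closed_agree_f0_f1: "closed (agree f0 f1)"
  using PL0_f0 PL0_f1 closed_agree by (simp add: PL0_def)

lemma agreement_beyond_orbital_start:
  assumes up: "\<And>x. x \<in> {a<..<c} \<Longrightarrow> x < f0 x" and "0 \<le> a" "c \<le> 1" "f0 c = c"
    and b: "f1 b = b" "b < c"
    and q: "a < q" "q < c" "f0 q = f1 q"
  shows "b < q"
proof (rule ccontr)
  assume "\<not> b < q"
  hence b_ac: "b \<in> {a<..<c}" and b01: "b \<in> {0..1}" using q b assms(2,3) by auto
  hence b_Z: "f0 b \<noteq> f1 b" using up b(1) by force
  obtain m where m: "m \<in> agree f0 f1" "q \<le> m" "m \<le> b"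
    and last: "\<And>y. y \<in> agree f0 f1 \<Longrightarrow> y \<le> b \<Longrightarrow> y \<le> m"
    using closed_greatest_below[OF closed_agree_f0_f1, of q b] q \<open>\<not> b < q\<close> assms(2,3)
    by (auto simp: agree_def)
  have "m \<noteq> b" using m(1) b_Z by (auto simp: agree_def)
  hence mb: "m < b" using m(3) by simp
  have m_ac: "m \<in> {a<..<c}" and m01: "m \<in> {0..1}" using m q mb b assms(2,3) by auto
  have fm: "f0 m = f1 m" using m(1) by (simp add: agree_def)
  hence "f1 m \<noteq> m" using up[OF m_ac] by simp
  then obtain u v where uv: "u < m" "m < v" "u \<in> {0..1}" "v \<in> {0..1}" "f1 v = v"
      and gap: "\<And>x. x \<in> {u<..<v} \<Longrightarrow> f1 x \<noteq> x"
      and out: "\<And>x. x \<in> {0..1} \<Longrightarrow> f1 x = x \<Longrightarrow> x \<le> u \<or> v \<le> x"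
      and Au: "f0 (f0 u) = f1 (f0 u)" and Av: "f0 (f0 v) = f1 (f0 v)"
    using f1_gap_around[OF m01] by metis
  have vb: "v \<le> b" using out[OF b01 b(1)] uv(1) mb by linarith
  have f1mv: "f1 m < v" using uv m01 mono_iff(2)[of m v] by simp
  have f0u: "f0 u \<le> m"
  proof -
    have "f0 u < f0 m" using uv m01 by (simp del: atLeastAtMost_iff)
    hence "f0 u \<le> b" using fm f1mv vb by linarith
    thus ?thesis using last Au uv(3) by (simp add: agree_def del: atLeastAtMost_iff)
  qed
  have v_ac: "v \<in> {a<..<c}" using m_ac uv(2) vb b_ac by auto
  have f0v: "b < f0 v"
  proof (rule ccontr)
    assume "\<not> b < f0 v"
    hence "f0 v \<le> m" using last Av uv(4) by (simp add: agree_def del: atLeastAtMost_iff)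
    thus False using up[OF v_ac] uv(2) by linarith
  qed
  show False
  proof (rule gap_straddle_contradiction[OF gap _ _ _ Av _ _ b01 _ _ b_Z])
    show "0 \<le> u" "u < v" "v \<le> 1" "f0 u < v" "v < f0 v" using uv f0u up[OF v_ac] by auto
    have "f0 (f0 u) \<le> f0 m" using f0u m01 uv(3) by (simp del: atLeastAtMost_iff)
    thus "f0 (f0 u) < b" using fm f1mv vb by linarith
    have "f0 v \<in> {a<..<c}"
      using up[OF v_ac] v_ac uv(4) assms(3,4) PL0_less_iff[OF PL0_f0, of v c] by auto
    thus "b < f0 (f0 v)" using up f0v by fastforce
  qed
qed

lemma agreement_before_orbital_end:
  assumes down: "\<And>x. x \<in> {a<..<c} \<Longrightarrow> f0 x < x" and "0 \<le> a" "c \<le> 1" "f0 a = a"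
    and d: "f1 d = d" "a < d"
    and q: "a < q" "q < c" "f0 q = f1 q"
  shows "q < d"
proof (rule ccontr)
  assume "\<not> q < d"
  hence d_ac: "d \<in> {a<..<c}" and d01: "d \<in> {0..1}" using q d assms(2,3) by auto
  hence d_Z: "f0 d \<noteq> f1 d" using down d(1) by force
  obtain m where m: "m \<in> agree f0 f1" "d \<le> m" "m \<le> q"
    and first: "\<And>y. y \<in> agree f0 f1 \<Longrightarrow> d \<le> y \<Longrightarrow> m \<le> y"
    using closed_least_above[OF closed_agree_f0_f1, of q d] q \<open>\<not> q < d\<close> assms(2,3)
    by (auto simp: agree_def)
  have "m \<noteq> d" using m(1) d_Z by (auto simp: agree_def)
  hence dm: "d < m" using m(2) by simp
  have m_ac: "m \<in> {a<..<c}" and m01: "m \<in> {0..1}" using m q dm d assms(2,3) by auto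
  have fm: "f0 m = f1 m" using m(1) by (simp add: agree_def)
  hence "f1 m \<noteq> m" using down[OF m_ac] by simp
  then obtain u v where uv: "u < m" "m < v" "u \<in> {0..1}" "v \<in> {0..1}" "f1 u = u"
      and gap: "\<And>x. x \<in> {u<..<v} \<Longrightarrow> f1 x \<noteq> x"
      and out: "\<And>x. x \<in> {0..1} \<Longrightarrow> f1 x = x \<Longrightarrow> x \<le> u \<or> v \<le> x"
      and Au: "f0 (f0 u) = f1 (f0 u)" and Av: "f0 (f0 v) = f1 (f0 v)"
    using f1_gap_around[OF m01] by metis
  have du: "d \<le> u" using out[OF d01 d(1)] uv(2) dm by linarith
  have f1um: "u < f1 m" using uv m01 mono_iff(2)[of u m] by simp
  have f0v: "m \<le> f0 v"
  proof -
    have "f0 m < f0 v" using uv m01 by (simp del: atLeastAtMost_iff)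
    hence "d \<le> f0 v" using fm f1um du by linarith
    thus ?thesis using first Av uv(4) by (simp add: agree_def del: atLeastAtMost_iff)
  qed
  have u_ac: "u \<in> {a<..<c}" using m_ac uv(1) du d_ac by auto
  have f0u: "f0 u < d"
  proof (rule ccontr)
    assume "\<not> f0 u < d"
    hence "m \<le> f0 u" using first Au uv(3) by (simp add: agree_def del: atLeastAtMost_iff)
    thus False using down[OF u_ac] uv(1) by linarith
  qed
  show False
  proof (rule gap_straddle_contradiction[OF gap _ _ _ Au _ _ d01 _ _ d_Z])
    show "0 \<le> u" "u < v" "v \<le> 1" "f0 u < u" "u < f0 v" using uv f0v down[OF u_ac] by auto
    have "f0 u \<in> {a<..<c}"
      using down[OF u_ac] u_ac uv(3) assms(2,4) PL0_less_iff[OF PL0_f0, of a u] by auto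
    thus "f0 (f0 u) < d" using down f0u by fastforce
    have "f0 m \<le> f0 (f0 v)" using f0v m01 uv(4) by (simp del: atLeastAtMost_iff)
    thus "d < f0 (f0 v)" using fm f1um du by linarith
  qed
qed

lemma up_bump_agreement:
  assumes up: "up_bump f0 {a<..<c}" and orb: "orbital f1 {b<..<c}"
    and q: "q \<in> {a<..<c}" "f0 q = f1 q"
  shows "b < q"
proof (rule agreement_beyond_orbital_start)
  have "orbital f0 {a<..<c}" using up by (simp add: up_bump_def)
  thus "0 \<le> a" "c \<le> 1" "f0 c = c" by (fact orbital_endpoints)+
  show "x < f0 x" if "x \<in> {a<..<c}" for x using up that by (simp add: up_bump_def)
  show "f1 b = b" "b < c" using orbital_endpoints[OF orb] by blast+
  show "a < q" "q < c" "f0 q = f1 q" using q by auto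
qed

lemma down_bump_agreement:
  assumes down: "down_bump f0 {a<..<c}" and orb: "orbital f1 {a<..<d}"
    and q: "q \<in> {a<..<c}" "f0 q = f1 q"
  shows "q < d"
proof (rule agreement_before_orbital_end)
  have "orbital f0 {a<..<c}" using down by (simp add: down_bump_def)
  thus "0 \<le> a" "c \<le> 1" "f0 a = a" by (fact orbital_endpoints)+
  show "f0 x < x" if "x \<in> {a<..<c}" for x using down that by (simp add: down_bump_def)
  show "f1 d = d" "a < d" using orbital_endpoints[OF orb] by blast+
  show "a < q" "q < c" "f0 q = f1 q" using q by auto
qed

end

theorem lemma2p9:
  fixes f0 f1 :: "real \<Rightarrow> real"
  assumes "PL0 f0" and "PL0 f1" and "standard_F f0 f1"
  shows
   "(\<forall>a c bn p q. up_bump f0 {a<..<c} \<and> orbital f1 {bn<..<c} \<and>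
        p \<in> {0..c} \<and> (\<forall>x\<in>{p..c}. f0 x = f1 x) \<and>
        (\<forall>r\<in>{0..c}. (\<forall>x\<in>{r..c}. f0 x = f1 x) \<longrightarrow> p \<le> r) \<and>
        q \<in> {a<..<p} \<and> f0 q = f1 q \<longrightarrow> q \<in> {bn<..<p})
    \<and> (\<forall>a c d1 \<rho> q. down_bump f0 {a<..<c} \<and> orbital f1 {a<..<d1} \<and>
        \<rho> \<in> {a..1} \<and> (\<forall>x\<in>{a..\<rho>}. f0 x = f1 x) \<and>
        (\<forall>r\<in>{a..1}. (\<forall>x\<in>{a..r}. f0 x = f1 x) \<longrightarrow> r \<le> \<rho>) \<and>
        q \<in> {\<rho><..<c} \<and> f0 q = f1 q \<longrightarrow> q \<in> {\<rho><..<d1})"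
proof -
  interpret standard_pair f0 f1 using assms by unfold_locales
  show ?thesis
  proof (intro conjI allI impI, goal_cases)
    case (1 a c bn p q)
    hence "q \<in> {a<..<c}" by auto
    thus ?case using 1 up_bump_agreement[of a c bn q] by auto
  next
    case (2 a c d1 \<rho> q)
    hence "q \<in> {a<..<c}" by auto
    thus ?case using 2 down_bump_agreement[of a c d1 q] by auto
  qed
qed

end
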